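(* Every countable pca $\mathcal{A}$ embeds in $\mathcal{K}_2$.
   Context: A pca is a set with a partial binary application operation containing distinct $\mathrm{s},\mathrm{k}$ with $\mathrm{k}ab\downarrow=a$, $\mathrm{s}ab\downarrow$, $\mathrm{s}abc\simeq(ac)(bc)$. An embedding of pcas is an injective map $f$ with: if $ab$ is defined then $f(a)f(b)$ is defined and equals $f(ab)$. $\mathcal{K}_2$: elements are all total functions $g:\omega\to\omega$, with $g\cdot h$ the function $n\mapsto\Phi^{g\oplus h}_{g(0)}(n)$ ($\Phi_e$ the $e$-th Turing functional, $(g\oplus h)(2n)=g(n)$, $(g\oplus h)(2n+1)=h(n)$), defined if and only if this function is total. *)

theory Defs
  imports Main "HOL-Library.Countable" "HOL-Library.Countable_Set"
begin

text \<open>A partial applicative structure on the type 'a: app a b = None means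
  "ab is undefined". Application is lifted to partial terms (options).\<close>

definition papp :: "('a \<Rightarrow> 'a \<Rightarrow> 'a option) \<Rightarrow> 'a option \<Rightarrow> 'a option \<Rightarrow> 'a option" where
  "papp app x y = (case x of None \<Rightarrow> None | Some a \<Rightarrow>
                     (case y of None \<Rightarrow> None | Some b \<Rightarrow> app a b))"

text \<open>pca with combinators s, k (Kleene equality = equality of options).\<close>
definition is_pca :: "('a \<Rightarrow> 'a \<Rightarrow> 'a option) \<Rightarrow> 'a \<Rightarrow> 'a \<Rightarrow> bool" where
  "is_pca app s k \<longleftrightarrow>
     s \<noteq> k \<and>
     (\<forall>a b. papp app (papp app (Some k) (Some a)) (Some b) = Some a) \<and>
     (\<forall>a b. papp app (papp app (Some s) (Some a)) (Some b) \<noteq> None) \<and>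
     (\<forall>a b c. papp app (papp app (papp app (Some s) (Some a)) (Some b)) (Some c)
              = papp app (papp app (Some a) (Some c)) (papp app (Some b) (Some c)))"

definition is_pca_embedding ::
  "('a \<Rightarrow> 'a \<Rightarrow> 'a option) \<Rightarrow> ('b \<Rightarrow> 'b \<Rightarrow> 'b option) \<Rightarrow> ('a \<Rightarrow> 'b) \<Rightarrow> bool" where
  "is_pca_embedding appA appB f \<longleftrightarrow>
     inj f \<and> (\<forall>a b c. appA a b = Some c \<longrightarrow> appB (f a) (f b) = Some (f c))"

datatype pcode = Zero | Succ | Proj nat | Oracle | Comp pcode "pcode list" | Prim pcode pcode | Mu pcode

instance pcode :: countable
  by countable_datatype

text \<open>Goedel numbering of codes: the e-th code is from_nat e (surjective).\<close>

fun hd0 :: "nat list \<Rightarrow> nat" where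
  "hd0 [] = 0" | "hd0 (x # _) = x"

inductive evalo :: "(nat \<Rightarrow> nat) \<Rightarrow> pcode \<Rightarrow> nat list \<Rightarrow> nat \<Rightarrow> bool" for h where
  ev_zero: "evalo h Zero xs 0"
| ev_succ: "evalo h Succ xs (Suc (hd0 xs))"
| ev_proj: "i < length xs \<Longrightarrow> evalo h (Proj i) xs (xs ! i)"
| ev_oracle: "evalo h Oracle xs (h (hd0 xs))"
| ev_comp: "list_all2 (\<lambda>g y. evalo h g xs y) gs ys \<Longrightarrow> evalo h f ys z \<Longrightarrow> evalo h (Comp f gs) xs z"
| ev_prim0: "evalo h f xs z \<Longrightarrow> evalo h (Prim f g) (0 # xs) z"
| ev_primS: "evalo h (Prim f g) (n # xs) r \<Longrightarrow> evalo h g (n # r # xs) z \<Longrightarrow>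
              evalo h (Prim f g) (Suc n # xs) z"
| ev_mu: "evalo h f (n # xs) 0 \<Longrightarrow> (\<forall>m<n. \<exists>y. y \<noteq> 0 \<and> evalo h f (m # xs) y) \<Longrightarrow>
              evalo h (Mu f) xs n"

definition phi_converges :: "nat \<Rightarrow> (nat \<Rightarrow> nat) \<Rightarrow> nat \<Rightarrow> bool" where
  "phi_converges e h n \<longleftrightarrow> (\<exists>y. evalo h (from_nat e) [n] y)"

definition phi :: "nat \<Rightarrow> (nat \<Rightarrow> nat) \<Rightarrow> nat \<Rightarrow> nat" where
  "phi e h n = (THE y. evalo h (from_nat e) [n] y)"

definition join :: "(nat \<Rightarrow> nat) \<Rightarrow> (nat \<Rightarrow> nat) \<Rightarrow> nat \<Rightarrow> nat" where
  "join g h n = (if even n then g (n div 2) else h (n div 2))"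

definition K2_app :: "(nat \<Rightarrow> nat) \<Rightarrow> (nat \<Rightarrow> nat) \<Rightarrow> (nat \<Rightarrow> nat) option" where
  "K2_app g h = (if (\<forall>n. phi_converges (g 0) (join g h) n)
                 then Some (\<lambda>n. phi (g 0) (join g h) n) else None)"

end

(*
  Fix an injection t of the structure into the naturals and one oracle program e. An element a
  is sent to the sequence f a = (e, u a, v a, D 3, D 4, ...), where u a = 2^(2 t a + 2),
  v a = 2^(2 t a + 3), and the tail D is shared by all elements: a table storing u c and v c,
  for c = ab, at positions q and q + 1, where 2 q = u a + v b. With the join of f a and f b as
  oracle, e reads u a and v b, queries the oracle at u a + v b and u a + v b + 2, i.e. f a at
  q and q + 1, and outputs f a with these two values in place of u a and v a, which is f c.
  The binary digits of u a + v b determine a and b, every q is even and at least 3, so table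
  entries never collide with each other or with the first three cells.
*)

theory Submission
  imports Defs
begin

unbundle bit_operations_syntax

lemma evalo_deterministic:
  "evalo h P xs y \<Longrightarrow> evalo h P xs y' \<Longrightarrow> y = y'"
proof (induction arbitrary: y' rule: evalo.induct)
  case (ev_comp xs gs ys f z)
  from ev_comp.prems obtain ys' where args': "list_all2 (\<lambda>g y. evalo h g xs y) gs ys'"
    and "evalo h f ys' y'"
    by (cases rule: evalo.cases) auto
  moreover have "ys = ys'"
    using ev_comp.IH(1) args' by (auto simp: list_all2_conv_all_nth intro: nth_equalityI)
  ultimately show ?case using ev_comp.IH(2) by blast
next
  case (ev_primS f g n xs r z)
  from ev_primS.prems obtain r' where "evalo h (Prim f g) (n # xs) r'" "evalo h g (n # r' # xs) y'"
    by (cases rule: evalo.cases) auto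
  then show ?case using ev_primS.IH by auto
next
  case (ev_mu f n xs)
  from ev_mu.prems have zero': "evalo h f (y' # xs) 0"
    and nonzero': "\<forall>m<y'. \<exists>y. y \<noteq> 0 \<and> evalo h f (m # xs) y"
    by (cases rule: evalo.cases; auto)+
  show ?case
  proof (rule linorder_cases[of n y'])
    assume "n < y'"
    with nonzero' obtain y where "y \<noteq> 0" "evalo h f (n # xs) y" by blast
    with ev_mu.IH(1) show ?thesis by fastforce
  next
    assume "y' < n"
    with ev_mu.IH(2) obtain y where "y \<noteq> 0" "\<forall>z. evalo h f (y' # xs) z \<longrightarrow> y = z"
      by blast
    with zero' show ?thesis by blast
  qed
next
  case (ev_prim0 f xs z g)
  from ev_prim0.prems have "evalo h f xs y'" by (cases rule: evalo.cases) auto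
  then show ?case using ev_prim0.IH by blast
qed (auto elim: evalo.cases)

lemma evalo_Proj0: "evalo h (Proj 0) (x # xs) x"
  using ev_proj[of 0 "x # xs" h] by simp

lemma evalo_Comp1:
  "evalo h g xs y \<Longrightarrow> evalo h f [y] z \<Longrightarrow> evalo h (Comp f [g]) xs z"
  by (rule ev_comp[where ys = "[y]"]) auto

lemma evalo_Comp2:
  "evalo h g1 xs y1 \<Longrightarrow> evalo h g2 xs y2 \<Longrightarrow> evalo h f [y1, y2] z \<Longrightarrow>
    evalo h (Comp f [g1, g2]) xs z"
  by (rule ev_comp[where ys = "[y1, y2]"]) auto

fun pconst :: "nat \<Rightarrow> pcode" where
  "pconst 0 = Zero"
| "pconst (Suc k) = Comp Succ [pconst k]"

definition pquery :: "pcode \<Rightarrow> pcode" where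
  "pquery p = Comp Oracle [p]"

definition plus_code :: pcode where
  "plus_code = Prim (Proj 0) (Comp Succ [Proj 1])"

definition padd :: "pcode \<Rightarrow> pcode \<Rightarrow> pcode" where
  "padd p q = Comp plus_code [p, q]"

definition pcase :: "pcode \<Rightarrow> pcode \<Rightarrow> pcode" where
  "pcase p q = Prim p (Comp q [Proj 0])"

lemma evalo_pconst: "evalo h (pconst k) xs k"
proof (induction k)
  case 0
  show ?case using ev_zero by simp
next
  case (Suc k)
  show ?case using evalo_Comp1[OF Suc ev_succ] by simp
qed

lemma evalo_pquery: "evalo h p xs y \<Longrightarrow> evalo h (pquery p) xs (h y)"
  unfolding pquery_def using evalo_Comp1 ev_oracle by fastforce

lemma evalo_plus_code: "evalo h plus_code [x, y] (x + y)"
  unfolding plus_code_def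
proof (induction x)
  case 0
  show ?case using ev_prim0[OF evalo_Proj0[of h y "[]"]] by simp
next
  case (Suc x)
  have "evalo h (Comp Succ [Proj 1]) [x, x + y, y] (Suc (x + y))"
    using evalo_Comp1[OF ev_proj[of 1 "[x, x + y, y]"] ev_succ] by simp
  from ev_primS[OF Suc this] show ?case by simp
qed

lemma evalo_padd:
  "evalo h p xs y \<Longrightarrow> evalo h q xs z \<Longrightarrow> evalo h (padd p q) xs (y + z)"
  unfolding padd_def by (rule evalo_Comp2[OF _ _ evalo_plus_code])

lemma evalo_pcase:
  assumes "evalo h p xs y0" and "\<And>n. evalo h q [n] (y n)"
  shows "evalo h (pcase p q) (n # xs) (case n of 0 \<Rightarrow> y0 | Suc m \<Rightarrow> y m)"
proof -
  have step: "evalo h (pcase p q) (Suc m # xs) (y m)" if "evalo h (pcase p q) (m # xs) r" for m r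
    using ev_primS[OF that[unfolded pcase_def] evalo_Comp1[OF evalo_Proj0 assms(2)]]
    unfolding pcase_def .
  have zero: "evalo h (pcase p q) (0 # xs) y0"
    unfolding pcase_def by (rule ev_prim0[OF assms(1)])
  show ?thesis
  proof (cases n)
    case (Suc m)
    have "\<exists>r. evalo h (pcase p q) (m # xs) r"
      by (induction m) (use zero step in blast)+
    with Suc step show ?thesis by auto
  qed (simp add: zero)
qed

definition address_code :: pcode where
  "address_code = padd (pquery (pconst 2)) (pquery (pconst 5))"

definition redirect_code :: pcode where
  "redirect_code =
     pcase (pquery Zero)
       (pcase (pquery address_code)
         (pcase (pquery (padd address_code (pconst 2)))
           (pquery (padd (padd (Proj 0) (Proj 0)) (pconst 6)))))"

lemma evalo_redirect_code:
  "evalo H redirect_code [n]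
     (if n = 1 then H (H 2 + H 5) else if n = 2 then H (H 2 + H 5 + 2) else H (2 * n))"
proof -
  have address: "evalo H address_code xs (H 2 + H 5)" for xs
    unfolding address_code_def by (intro evalo_padd evalo_pquery evalo_pconst)
  have tail: "evalo H (pquery (padd (padd (Proj 0) (Proj 0)) (pconst 6))) [m] (H (m + m + 6))" for m
    by (intro evalo_pquery evalo_padd evalo_Proj0 evalo_pconst)
  have "evalo H redirect_code [n]
     (case n of 0 \<Rightarrow> H 0 | Suc 0 \<Rightarrow> H (H 2 + H 5) | Suc (Suc 0) \<Rightarrow> H (H 2 + H 5 + 2)
        | Suc (Suc (Suc m)) \<Rightarrow> H (m + m + 6))"
    unfolding redirect_code_def
    using evalo_pcase[OF evalo_pquery[OF ev_zero]
            evalo_pcase[OF evalo_pquery[OF address]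
              evalo_pcase[OF evalo_pquery[OF evalo_padd[OF address evalo_pconst]] tail]]]
    by simp
  then show ?thesis
    by (auto simp: numeral_eq_Suc split: nat.splits)
qed

lemma K2_app_eqI:
  assumes "\<And>n. evalo (join g h) (from_nat (g 0)) [n] (r n)"
  shows "K2_app g h = Some r"
proof -
  have "evalo (join g h) (from_nat (g 0)) [n] = (\<lambda>y. y = r n)" for n
    using assms evalo_deterministic by blast
  then show ?thesis
    unfolding K2_app_def phi_converges_def phi_def by simp
qed

lemma K2_app_redirect:
  assumes "g 0 = to_nat redirect_code" and "g 1 + h 2 = 2 * q"
  shows "K2_app g h = Some (g(1 := g q, 2 := g (Suc q)))"
proof (rule K2_app_eqI)
  fix n
  have join_even: "join g h (2 * k) = g k" for k
    unfolding join_def by simp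
  have address: "join g h 2 + join g h 5 = 2 * q"
    using assms(2) by (simp add: join_def)
  have next_cell: "join g h (2 * q + 2) = g (Suc q)"
    using join_even[of "Suc q"] by simp
  have "evalo (join g h) redirect_code [n]
      (if n = 1 then g q else if n = 2 then g (Suc q) else g n)"
    using evalo_redirect_code[of "join g h" n] unfolding address next_cell join_even .
  moreover have "(g(1 := g q, 2 := g (Suc q))) n
      = (if n = 1 then g q else if n = 2 then g (Suc q) else g n)"
    by simp
  ultimately show "evalo (join g h) (from_nat (g 0)) [n] ((g(1 := g q, 2 := g (Suc q))) n)"
    by (simp only: assms(1) from_nat_to_nat)
qed

definition interleaved_table :: "('b \<Rightarrow> nat) \<Rightarrow> ('b \<Rightarrow> 'c) \<Rightarrow> ('b \<Rightarrow> 'c) \<Rightarrow> nat \<Rightarrow> 'c" where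
  "interleaved_table code F G n = (if even n then F else G) (inv code (2 * (n div 2)))"

lemma interleaved_table_code:
  "inj code \<Longrightarrow> even (code x) \<Longrightarrow> interleaved_table code F G (code x) = F x"
  by (simp add: interleaved_table_def inv_f_f)

lemma interleaved_table_Suc_code:
  "inj code \<Longrightarrow> even (code x) \<Longrightarrow> interleaved_table code F G (Suc (code x)) = G x"
  by (simp add: interleaved_table_def inv_f_f)

lemma bit_add_two_powers_iff:
  assumes "i \<noteq> j"
  shows "bit ((2::nat) ^ i + 2 ^ j) n \<longleftrightarrow> n = i \<or> n = j"
proof -
  have "(2::nat) ^ i AND 2 ^ j = 0"
    using assms by (auto simp: bit_eq_iff bit_and_iff bit_exp_iff)
  then show ?thesis
    by (simp add: disjunctive_add_eq_or bit_or_iff bit_exp_iff)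
qed

lemma odd_even_power_sum_eqD:
  assumes "(2::nat) ^ (2 * x + 1) + 2 ^ (2 * y + 2) = 2 ^ (2 * x' + 1) + 2 ^ (2 * y' + 2)"
  shows "x = x' \<and> y = y'"
proof -
  have ne: "2 * x + 1 \<noteq> 2 * y + 2" "2 * x' + 1 \<noteq> 2 * y' + 2"
    by presburger+
  have "bit ((2::nat) ^ (2 * x + 1) + 2 ^ (2 * y + 2)) n
      \<longleftrightarrow> bit ((2::nat) ^ (2 * x' + 1) + 2 ^ (2 * y' + 2)) n" for n
    by (simp only: assms)
  then have "(n = 2 * x + 1 \<or> n = 2 * y + 2) \<longleftrightarrow> (n = 2 * x' + 1 \<or> n = 2 * y' + 2)" for n
    unfolding bit_add_two_powers_iff[OF ne(1)] bit_add_two_powers_iff[OF ne(2)] .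
  from this[of "2 * x + 1"] this[of "2 * y + 2"] show ?thesis
    by presburger
qed

lemma countable_additive_pairing:
  assumes "countable (UNIV :: 'a set)"
  obtains u v :: "'a \<Rightarrow> nat" and code :: "'a \<times> 'a \<Rightarrow> nat"
  where "inj u" "\<And>a b. u a + v b = 2 * code (a, b)"
    "inj code" "\<And>x. even (code x)" "\<And>x. 3 \<le> code x"
proof -
  obtain t :: "'a \<Rightarrow> nat" where t: "inj t"
    using assms unfolding countable_def by blast
  define u :: "'a \<Rightarrow> nat" where "u a = 2 ^ (2 * t a + 2)" for a
  define v :: "'a \<Rightarrow> nat" where "v b = 2 ^ (2 * t b + 3)" for b
  define code :: "'a \<times> 'a \<Rightarrow> nat" where
    "code = (\<lambda>(a, b). 2 ^ (2 * t a + 1) + 2 ^ (2 * t b + 2))"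
  have "inj u"
    using t unfolding u_def by (auto intro!: injI dest: injD)
  moreover have "u a + v b = 2 * code (a, b)" for a b
    unfolding u_def v_def code_def by (simp add: power_add)
  moreover have "inj code"
  proof (rule injI, clarify)
    fix a b a' b'
    assume "code (a, b) = code (a', b')"
    then have "t a = t a' \<and> t b = t b'"
      unfolding code_def prod.case by (rule odd_even_power_sum_eqD)
    with t show "a = a' \<and> b = b'"
      by (auto dest: injD)
  qed
  moreover have "even (code x)" for x
    unfolding code_def by (auto split: prod.split)
  moreover have "3 \<le> code x" for x
  proof (cases x)
    case (Pair a b)
    have "2 \<le> (2::nat) ^ (2 * t a + 1)" "4 \<le> (2::nat) ^ (2 * t b + 2)"
      by (simp_all add: power_add power_mult)
    then show ?thesis
      unfolding Pair code_def prod.case by linarith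
  qed
  ultimately show thesis
    by (rule that)
qed

lemma countable_applicative_structure_embeds_K2:
  fixes app :: "'a \<Rightarrow> 'a \<Rightarrow> 'a option"
  assumes "countable (UNIV :: 'a set)"
  shows "\<exists>f. is_pca_embedding app K2_app f"
proof -
  obtain u v :: "'a \<Rightarrow> nat" and code :: "'a \<times> 'a \<Rightarrow> nat"
    where u: "inj u" and sum: "\<And>a b. u a + v b = 2 * code (a, b)"
      and code: "inj code" "\<And>x. even (code x)" "\<And>x. 3 \<le> code x"
    using countable_additive_pairing[OF assms] by blast
  define D where
    "D = interleaved_table code (\<lambda>(a, b). u (the (app a b))) (\<lambda>(a, b). v (the (app a b)))"
  define f where "f a = D(0 := to_nat redirect_code, 1 := u a, 2 := v a)" for a
  have "inj f"
  proof (rule injI)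
    fix a b
    assume "f a = f b"
    then have "f a 1 = f b 1"
      by simp
    then have "u a = u b"
      by (simp add: f_def)
    with u show "a = b"
      by (rule injD)
  qed
  moreover have "K2_app (f a) (f b) = Some (f c)" if "app a b = Some c" for a b c
  proof -
    have "3 \<le> code (a, b)"
      by (rule code(3))
    then have "f a (code (a, b)) = u c" "f a (Suc (code (a, b))) = v c"
      using that code(1,2)
      by (simp_all add: f_def D_def interleaved_table_code interleaved_table_Suc_code)
    moreover have "K2_app (f a) (f b)
        = Some ((f a)(1 := f a (code (a, b)), 2 := f a (Suc (code (a, b)))))"
      by (rule K2_app_redirect) (simp_all add: f_def sum)
    ultimately show ?thesis
      by (simp add: f_def fun_eq_iff)
  qed
  ultimately show ?thesis
    unfolding is_pca_embedding_def by blast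
qed

theorem corollary6p2:
  fixes app :: "'a \<Rightarrow> 'a \<Rightarrow> 'a option" and s k :: 'a
  assumes "is_pca app s k"
    and "countable (UNIV :: 'a set)"
  shows "\<exists>f :: 'a \<Rightarrow> (nat \<Rightarrow> nat). is_pca_embedding app K2_app f"
  using countable_applicative_structure_embeds_K2[OF assms(2)] .

end
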